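(* In the setting described in the context, let $x_*\in\mathbb{R}^n$, $\mathcal{C}_*=D^pf(x_* )$, let $P_k = I - \frac{W_k^{-1}s_ks_k^TW_k^{-T}}{s_k^TW_k^{-T}W_k^{-1}s_k}$, and define the tensor $\mathcal{E}_k\in\mathbb{R}^{\otimes^p n}$ by $(\mathcal{C}_{k+1}-\mathcal{C}_* )[W_k]^p = (\mathcal{C}_k-\mathcal{C}_* )[W_k]^p[P_k]^p + \mathcal{E}_k[W_k]^p$. Then $\|\mathcal{E}_k\|_2 \le \big(1+\kappa_2(W_k)^p\big)\|\widetilde{\mathcal{C}}_k-\mathcal{C}_*\|_2$ for every $k$.
   Context: Setting (higher-order secant update): $p\ge 2$; $f:\mathbb{R}^n\to\mathbb{R}$ is $p$ times continuously differentiable, $D^pf(x)$ denoting its $p$th derivative viewed as a symmetric multilinear map; $(x_k)_{k\ge0}$ is a sequence in $\mathbb{R}^n$ with steps $s_k = x_{k+1}-x_k \ne 0$; $(W_k)_{k\ge0}$ are nonsingular $n\times n$ matrices; $\widetilde{\mathcal{C}}_k = \int_0^1 D^pf(x_k+ts_k)\,dt$; $\mathcal{C}_0\in\mathbb{R}^{\otimes^p n}_{\mathrm{sym}}$ is arbitrary and $\mathcal{C}_{k+1}$ is the unique minimizer of $\|(\mathcal{C}-\mathcal{C}_k)[W_k]^p\|_F$ over $\mathcal{C}\in\mathbb{R}^{\otimes^p n}_{\mathrm{sym}}$ subject to $\mathcal{C}[s_k]=\widetilde{\mathcal{C}}_k[s_k]$. Notation: a $p$-tensor is a multilinear map $(\mathbb{R}^n)^p\to\mathbb{R}$;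 $\mathcal{T}[s]$ fixes the first argument to $s$; $(\mathcal{T}[M]^p)[s_1,\dots,s_p]=\mathcal{T}[Ms_1,\dots,Ms_p]$; symmetric means invariant under permutation of arguments; $\|\cdot\|_F$ is the Frobenius norm of the array of entries; $\|\mathcal{T}\|_2=\max_{\|u_i\|_2=1}|\mathcal{T}[u_1,\dots,u_p]|$; $\kappa_2(W)=\|W\|_2\|W^{-1}\|_2$. *)

theory Defs
  imports "HOL-Analysis.Analysis"
begin

text \<open>A p-tensor on R^n is represented by its array of entries, a function on
index lists; only lists of length p are meaningful.\<close>

type_synonym 'n tensor = "'n list \<Rightarrow> real"

definition idx :: "nat \<Rightarrow> 'n::finite list set" where
  "idx p = {is. length is = p}"

definition teval :: "nat \<Rightarrow> 'n::finite tensor \<Rightarrow> (real^'n) list \<Rightarrow> real" where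
  "teval p T us = (\<Sum>is\<in>idx p. T is * (\<Prod>k<p. (us ! k) $ (is ! k)))"

definition tfirst :: "real^'n::finite \<Rightarrow> 'n tensor \<Rightarrow> 'n tensor" where
  "tfirst s T = (\<lambda>is. \<Sum>i\<in>UNIV. s $ i * T (i # is))"

text \<open>T[M]^p, i.e. (T[M]^p)[s_1,...,s_p] = T[M s_1,...,M s_p].\<close>
definition tmul :: "nat \<Rightarrow> 'n::finite tensor \<Rightarrow> real^'n^'n \<Rightarrow> 'n tensor" where
  "tmul p T M = (\<lambda>js. \<Sum>is\<in>idx p. T is * (\<Prod>k<p. M $ (is ! k) $ (js ! k)))"

definition sym_tensor :: "nat \<Rightarrow> 'n::finite tensor \<Rightarrow> bool" where
  "sym_tensor p T \<longleftrightarrow> (\<forall>is. length is \<noteq> p \<longrightarrow> T is = 0) \<and>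
     (\<forall>is js. length is = p \<longrightarrow> mset js = mset is \<longrightarrow> T js = T is)"

definition frob :: "nat \<Rightarrow> 'n::finite tensor \<Rightarrow> real" where
  "frob p T = sqrt (\<Sum>is\<in>idx p. (T is)\<^sup>2)"

definition tnorm2 :: "nat \<Rightarrow> 'n::finite tensor \<Rightarrow> real" where
  "tnorm2 p T = Sup {\<bar>teval p T us\<bar> | us. length us = p \<and> (\<forall>u\<in>set us. norm u = 1)}"

definition kappa2 :: "real^'n^'n::finite \<Rightarrow> real" where
  "kappa2 W = onorm (\<lambda>x. W *v x) * onorm (\<lambda>x. matrix_inv W *v x)"

text \<open>Iterated partial derivatives: pder k f x [i_1,...,i_k] = d_{i_1} ... d_{i_k} f (x),
 i.e. the entries of D^k f(x).\<close>
fun pder :: "nat \<Rightarrow> (real^'n::finite \<Rightarrow> real) \<Rightarrow> real^'n \<Rightarrow> 'n list \<Rightarrow> real" where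
  "pder 0 f x is = f x"
| "pder (Suc k) f x [] = 0"
| "pder (Suc k) f x (i # is) = frechet_derivative (\<lambda>y. pder k f y is) (at x) (axis i 1)"

definition Cp :: "nat \<Rightarrow> (real^'n::finite \<Rightarrow> real) \<Rightarrow> bool" where
  "Cp p f \<longleftrightarrow> (\<forall>k<p. \<forall>is. length is = k \<longrightarrow> (\<forall>x. (\<lambda>y. pder k f y is) differentiable (at x))) \<and>
               (\<forall>k\<le>p. \<forall>is. length is = k \<longrightarrow> continuous_on UNIV (\<lambda>y. pder k f y is))"

text \<open>Averaged p-th derivative along the step: int_0^1 D^p f(x + t s) dt.\<close>
definition avgD :: "nat \<Rightarrow> (real^'n::finite \<Rightarrow> real) \<Rightarrow> real^'n \<Rightarrow> real^'n \<Rightarrow> 'n tensor" where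
  "avgD p f x s = (\<lambda>is. integral {0..1} (\<lambda>t::real. pder p f (x + t *\<^sub>R s) is))"

definition feasible :: "nat \<Rightarrow> real^'n::finite \<Rightarrow> 'n tensor \<Rightarrow> 'n tensor set" where
  "feasible p s Ct = {C. sym_tensor p C \<and> (\<forall>is. length is = p - 1 \<longrightarrow> tfirst s C is = tfirst s Ct is)}"

definition projP :: "real^'n^'n::finite \<Rightarrow> real^'n \<Rightarrow> real^'n^'n" where
  "projP W s = (let v = matrix_inv W *v s in
      mat 1 - (\<chi> i j. v $ i * v $ j / (v \<bullet> v)))"

end

theory Submission
  imports Defs "HOL-Combinatorics.Permutations"
begin

(*
  In W-coordinates the secant update is an orthogonal projection. Put R = (Ct - C_k)[W]^p, where
  Ct is the averaged p-th derivative along the step s. The tensor C' = C_k + (R - R[P]^p)[W^-1]^p is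
  feasible, and for every feasible C the tensor Y = (C - C')[W]^p is symmetric and vanishes as soon
  as W^-1 s is put into one of its slots, so Y[P]^p = Y. As P is symmetric, Y is then Frobenius-
  orthogonal to R - R[P]^p = (C' - C_k)[W]^p, and minimality of C_{k+1} forces
  (C_{k+1} - C_k)[W]^p = R - R[P]^p. Substituted into the defining relation of E this gives
  E = D - D[W P W^-1]^p with D = Ct - C_*, and the bound follows from the triangle inequality,
  since the operator norm of W P W^-1 is at most kappa(W), P being an orthogonal projector.
  Feasibility of C' needs the symmetry of Ct, i.e. Schwarz's theorem on mixed partial derivatives.
*)

lemma finite_idx [simp]: "finite (idx p :: 'n::finite list set)"
  unfolding idx_def using finite_lists_length_eq[of "UNIV::'n set" p] by simp

lemma sum_idx_Suc:
  "(\<Sum>is\<in>idx (Suc p). F is) = (\<Sum>i\<in>(UNIV::'n::finite set). \<Sum>is\<in>idx p. F (i # is))"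
proof -
  have "idx (Suc p) = (\<lambda>(i, is). i # is) ` (UNIV \<times> (idx p :: 'n list set))"
    unfolding idx_def by (auto simp: length_Suc_conv image_iff)
  moreover have "inj_on (\<lambda>(i, is). i # is) (UNIV \<times> (idx p :: 'n list set))"
    by (auto simp: inj_on_def)
  ultimately show ?thesis
    by (simp add: sum.reindex sum.cartesian_product split_def)
qed

lemma sum_idx_prod_nth:
  "(\<Sum>is\<in>idx p. \<Prod>k<p. g k (is ! k)) = (\<Prod>k<p. \<Sum>i\<in>(UNIV::'n::finite set). (g k i :: real))"
proof (induction p arbitrary: g)
  case 0
  then show ?case by (simp add: idx_def)
next
  case (Suc p)
  have "(\<Sum>is\<in>idx (Suc p). \<Prod>k<Suc p. g k (is ! k))
      = (\<Sum>i\<in>(UNIV::'n set). g 0 i * (\<Sum>is\<in>idx p. \<Prod>k<p. g (Suc k) (is ! k)))"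
    unfolding sum_idx_Suc prod.lessThan_Suc_shift by (simp add: sum_distrib_left)
  then show ?case
    unfolding prod.lessThan_Suc_shift by (simp add: Suc.IH[of "\<lambda>k. g (Suc k)"] sum_distrib_right)
qed

lemma tmul_cong: "(\<And>is. is \<in> idx p \<Longrightarrow> T is = T' is) \<Longrightarrow> tmul p T M = tmul p T' M"
  unfolding tmul_def by (intro ext sum.cong) auto

lemma teval_cong: "(\<And>is. is \<in> idx p \<Longrightarrow> T is = T' is) \<Longrightarrow> teval p T us = teval p T' us"
  unfolding teval_def by (intro sum.cong) auto

lemma tmul_add: "tmul p (\<lambda>is. A is + B is) M js = tmul p A M js + tmul p B M js"
  unfolding tmul_def by (simp add: sum.distrib algebra_simps)

lemma tmul_diff: "tmul p (\<lambda>is. A is - B is) M js = tmul p A M js - tmul p B M js"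
  unfolding tmul_def by (simp add: sum_subtractf algebra_simps)

lemma tmul_zero [simp]: "tmul p (\<lambda>is. 0) M js = 0"
  unfolding tmul_def by simp

lemma teval_diff: "teval p (\<lambda>is. A is - B is) us = teval p A us - teval p B us"
  unfolding teval_def by (simp add: sum_subtractf algebra_simps)

lemma tfirst_diff: "tfirst s (\<lambda>is. A is - B is) js = tfirst s A js - tfirst s B js"
  unfolding tfirst_def by (simp add: sum_subtractf algebra_simps)

lemma tfirst_zero [simp]: "tfirst 0 T = (\<lambda>js. 0)"
  unfolding tfirst_def by simp

lemma tmul_tmul: "tmul p (tmul p T M) N js = tmul p T (M ** N) js"
proof -
  have "tmul p (tmul p T M) N js
      = (\<Sum>ls\<in>idx p. T ls * (\<Sum>is\<in>idx p. \<Prod>k<p. M $ (ls ! k) $ (is ! k) * N $ (is ! k) $ (js ! k)))"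
    unfolding tmul_def
    by (simp add: sum_distrib_left sum_distrib_right prod.distrib mult.assoc) (rule sum.swap)
  also have "\<dots> = (\<Sum>ls\<in>idx p. T ls * (\<Prod>k<p. \<Sum>i\<in>UNIV. M $ (ls ! k) $ i * N $ i $ (js ! k)))"
    by (simp add: sum_idx_prod_nth[where g="\<lambda>k i. M $ (_ ! k) $ i * N $ i $ (js ! k)"])
  finally show ?thesis
    unfolding tmul_def by (simp add: matrix_matrix_mult_def)
qed

lemma tmul_mat_1:
  assumes "length js = p"
  shows "tmul p T (mat 1) js = T js"
proof -
  have "(\<Prod>k<p. mat 1 $ (is ! k) $ (js ! k)) = (if is = js then 1 else 0 :: real)"
    if "length is = p" for "is" :: "'a list"
    using that assms by (auto simp: mat_def) (metis lessThan_iff nth_equalityI)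
  then have "tmul p T (mat 1) js = (\<Sum>is\<in>idx p. if is = js then T js else 0)"
    unfolding tmul_def by (intro sum.cong) (auto simp: idx_def)
  also have "\<dots> = T js"
    using assms by (simp add: sum.delta) (simp add: idx_def)
  finally show ?thesis .
qed

lemma teval_tmul:
  assumes "length us = p"
  shows "teval p (tmul p T M) us = teval p T (map (\<lambda>u. M *v u) us)"
proof -
  have "teval p (tmul p T M) us
      = (\<Sum>is\<in>idx p. T is * (\<Sum>js\<in>idx p. \<Prod>k<p. M $ (is ! k) $ (js ! k) * (us ! k) $ (js ! k)))"
    unfolding teval_def tmul_def
    by (simp add: sum_distrib_left sum_distrib_right prod.distrib mult.assoc) (rule sum.swap)
  also have "\<dots> = (\<Sum>is\<in>idx p. T is * (\<Prod>k<p. \<Sum>i\<in>UNIV. M $ (is ! k) $ i * (us ! k) $ i))"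
    by (simp add: sum_idx_prod_nth[where g="\<lambda>k i. M $ (_ ! k) $ i * (us ! k) $ i"])
  finally show ?thesis
    unfolding teval_def using assms by (simp add: matrix_vector_mult_def)
qed

lemma sum_tmul_transpose:
  "(\<Sum>js\<in>idx p. tmul p T M js * S js) = (\<Sum>is\<in>idx p. T is * tmul p S (transpose M) is)"
  unfolding tmul_def
  by (simp add: sum_distrib_right sum_distrib_left transpose_def mult_ac) (rule sum.swap)

lemma tfirst_tmul: "tfirst u (tmul (Suc q) T M) js = tmul q (tfirst (M *v u) T) M js"
proof -
  define P where "P is = (\<Prod>k<q. M $ (is ! k) $ (js ! k))" for "is"
  have "tfirst u (tmul (Suc q) T M) js
      = (\<Sum>i\<in>UNIV. \<Sum>i0\<in>UNIV. \<Sum>is\<in>idx q. u $ i * M $ i0 $ i * T (i0 # is) * P is)"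
    unfolding tfirst_def tmul_def sum_idx_Suc prod.lessThan_Suc_shift P_def
    by (simp add: sum_distrib_left mult_ac)
  also have "\<dots> = (\<Sum>i0\<in>UNIV. \<Sum>i\<in>UNIV. \<Sum>is\<in>idx q. u $ i * M $ i0 $ i * T (i0 # is) * P is)"
    by (rule sum.swap)
  also have "\<dots> = (\<Sum>i0\<in>UNIV. \<Sum>is\<in>idx q. \<Sum>i\<in>UNIV. u $ i * M $ i0 $ i * T (i0 # is) * P is)"
    by (rule sum.cong[OF refl], rule sum.swap)
  also have "\<dots> = (\<Sum>is\<in>idx q. \<Sum>i0\<in>UNIV. \<Sum>i\<in>UNIV. u $ i * M $ i0 $ i * T (i0 # is) * P is)"
    by (rule sum.swap)
  also have "\<dots> = tmul q (tfirst (M *v u) T) M js"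
    unfolding tmul_def tfirst_def matrix_vector_mult_def P_def
    by (simp add: sum_distrib_left sum_distrib_right mult_ac)
  finally show ?thesis .
qed

text \<open>The symmetry half of \<open>sym_tensor\<close>: \<open>tmul\<close> does not preserve the support condition.\<close>
definition perm_invariant :: "nat \<Rightarrow> 'n::finite tensor \<Rightarrow> bool" where
  "perm_invariant p T \<longleftrightarrow> (\<forall>is js. length is = p \<longrightarrow> mset js = mset is \<longrightarrow> T js = T is)"

lemma perm_invariant_diff:
  "perm_invariant p A \<Longrightarrow> perm_invariant p B \<Longrightarrow> perm_invariant p (\<lambda>is. A is - B is)"
  unfolding perm_invariant_def by metis

lemma sym_tensor_perm_invariant: "sym_tensor p T \<Longrightarrow> perm_invariant p T"
  unfolding sym_tensor_def perm_invariant_def by blast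

lemma bij_betw_permute_list_idx:
  assumes "\<tau> permutes {..<p}"
  shows "bij_betw (permute_list \<tau>) (idx p) (idx p)"
proof (rule bij_betw_byWitness[where f'="permute_list (inv \<tau>)"])
  have "permute_list (inv \<tau>) (permute_list \<tau> a) = a" "permute_list \<tau> (permute_list (inv \<tau>) a) = a"
    if "a \<in> idx p" for a
    using that assms permutes_inv[OF assms]
      permute_list_compose[of "inv \<tau>" a \<tau>] permute_list_compose[of \<tau> a "inv \<tau>"]
    by (simp_all add: idx_def permutes_inv_o)
  then show "\<forall>a\<in>idx p. permute_list (inv \<tau>) (permute_list \<tau> a) = a"
    "\<forall>a\<in>idx p. permute_list \<tau> (permute_list (inv \<tau>) a) = a"
    by auto
qed (auto simp: idx_def)

lemma sum_idx_permute_slots: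
  fixes T :: "'n::finite tensor"
  assumes T: "perm_invariant p T" and \<tau>: "\<tau> permutes {..<p}"
  shows "(\<Sum>is\<in>idx p. T is * (\<Prod>k<p. F k (is ! k)))
       = (\<Sum>is\<in>idx p. T is * (\<Prod>k<p. F (inv \<tau> k) (is ! k)))"
proof -
  have "(\<Sum>is\<in>idx p. T is * (\<Prod>k<p. F k (is ! k)))
      = (\<Sum>is\<in>idx p. T (permute_list \<tau> is) * (\<Prod>k<p. F k (permute_list \<tau> is ! k)))"
    by (rule sum.reindex_bij_betw[OF bij_betw_permute_list_idx[OF \<tau>], symmetric])
  also have "\<dots> = (\<Sum>is\<in>idx p. T is * (\<Prod>k<p. F k (is ! \<tau> k)))"
  proof -
    have "T (permute_list \<tau> is) = T is" if "is \<in> idx p" for "is"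
    proof -
      have "length is = p"
        using that by (simp add: idx_def)
      then have "mset (permute_list \<tau> is) = mset is"
        using \<tau> by simp
      then show ?thesis
        using T \<open>length is = p\<close> unfolding perm_invariant_def by blast
    qed
    moreover have "permute_list \<tau> is ! k = is ! \<tau> k" if "is \<in> idx p" and "k < p" for "is" :: "'n list" and k
      using that \<tau> by (simp add: idx_def permute_list_nth)
    ultimately show ?thesis
      by (intro sum.cong refl arg_cong2[where f="(*)"] prod.cong) auto
  qed
  also have "\<dots> = (\<Sum>is\<in>idx p. T is * (\<Prod>k<p. F (inv \<tau> k) (is ! k)))"
    using permutes_in_image[OF \<tau>] permutes_in_image[OF permutes_inv[OF \<tau>]]
    by (intro sum.cong refl arg_cong2[where f="(*)"] prod.reindex_bij_witness[where i="inv \<tau>" and j=\<tau>])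
      (auto simp: permutes_inverses[OF \<tau>])
  finally show ?thesis .
qed

lemma perm_invariant_tmul: "perm_invariant p T \<Longrightarrow> perm_invariant p (tmul p T M)"
  unfolding perm_invariant_def[of p "tmul p T M"]
proof (intro allI impI)
  fix js js' :: "'a list"
  assume T: "perm_invariant p T" and l: "length js = p" and m: "mset js' = mset js"
  obtain \<tau> where \<tau>: "\<tau> permutes {..<p}" and js': "js' = permute_list \<tau> js"
    using mset_eq_permutation[OF m] l by metis
  have "tmul p T M js' = (\<Sum>is\<in>idx p. T is * (\<Prod>k<p. M $ (is ! k) $ (js ! \<tau> k)))"
    unfolding tmul_def js' using l \<tau> by (simp add: permute_list_nth)
  also have "\<dots> = tmul p T M js"
    unfolding tmul_def sum_idx_permute_slots[OF T \<tau>, of "\<lambda>k i. M $ i $ (js ! \<tau> k)"]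
    by (simp add: permutes_inverses[OF \<tau>])
  finally show "tmul p T M js' = tmul p T M js" .
qed

lemma perm_invariant_contract_slot:
  assumes A: "perm_invariant (Suc q) A" and Av: "\<And>is. is \<in> idx q \<Longrightarrow> tfirst v A is = 0"
    and m: "m < Suc q" and Fm: "\<And>i. F m i = c * v $ i"
  shows "(\<Sum>is\<in>idx (Suc q). A is * (\<Prod>k<Suc q. F k (is ! k))) = 0"
proof -
  let ?t = "Transposition.transpose 0 m"
  have t: "?t permutes {..<Suc q}"
    using m by (intro permutes_swap_id) auto
  have "(\<Sum>is\<in>idx (Suc q). A is * (\<Prod>k<Suc q. F k (is ! k)))
      = (\<Sum>is\<in>idx (Suc q). A is * (\<Prod>k<Suc q. F (?t k) (is ! k)))"
    using sum_idx_permute_slots[OF A t, of F] by simp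
  also have "\<dots> = (\<Sum>is\<in>idx q. c * (\<Prod>k<q. F (?t (Suc k)) (is ! k)) * tfirst v A is)"
    unfolding sum_idx_Suc prod.lessThan_Suc_shift tfirst_def
    by (subst sum.swap) (simp add: Fm sum_distrib_left sum_distrib_right mult_ac)
  also have "\<dots> = 0"
    using Av by simp
  finally show ?thesis .
qed

text \<open>For \<open>v = 0\<close> the division by \<open>v \<bullet> v = 0\<close> yields 0, so \<open>perp_proj 0 = mat 1\<close>.\<close>
definition perp_proj :: "real^'n::finite \<Rightarrow> real^'n^'n" where
  "perp_proj v = mat 1 - (\<chi> i j. v $ i * v $ j / (v \<bullet> v))"

lemma projP_eq_perp_proj: "projP W s = perp_proj (matrix_inv W *v s)"
  unfolding projP_def perp_proj_def Let_def ..

lemma perp_proj_entry: "perp_proj v $ i $ j = (if i = j then 1 else 0) - v $ i * v $ j / (v \<bullet> v)"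
  by (simp add: perp_proj_def mat_def)

lemma transpose_perp_proj: "transpose (perp_proj v) = perp_proj v"
  by (simp add: vec_eq_iff transpose_def perp_proj_entry mult.commute)

lemma perp_proj_mult: "perp_proj v *v w = w - ((v \<bullet> w) / (v \<bullet> v)) *\<^sub>R v"
proof -
  have "(\<chi> i j. v $ i * v $ j / (v \<bullet> v)) *v w = ((v \<bullet> w) / (v \<bullet> v)) *\<^sub>R v"
    by (simp add: vec_eq_iff matrix_vector_mult_def inner_vec_def sum_distrib_left sum_divide_distrib mult_ac)
  then show ?thesis
    by (simp add: perp_proj_def matrix_vector_mult_diff_rdistrib)
qed

lemma perp_proj_self: "perp_proj v *v v = 0"
  by (cases "v = 0") (simp_all add: perp_proj_mult)

lemma norm_perp_proj_le: "norm (perp_proj v *v w) \<le> norm w"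
proof (cases "v = 0")
  case True
  then show ?thesis by (simp add: perp_proj_mult)
next
  case False
  then have vv: "v \<bullet> v > 0" by simp
  have "(norm (perp_proj v *v w))\<^sup>2 = w \<bullet> w - (v \<bullet> w)\<^sup>2 / (v \<bullet> v)"
    unfolding perp_proj_mult power2_norm_eq_inner using vv
    by (simp add: inner_diff inner_commute field_simps power2_eq_square)
  also have "\<dots> \<le> (norm w)\<^sup>2"
    using vv by (simp add: power2_norm_eq_inner)
  finally show ?thesis by (rule power2_le_imp_le) simp
qed

text \<open>Expanding each factor of \<open>\<Prod>k. (\<delta> - v v\<^sup>T/(v\<bullet>v))\<close> splits \<open>Y[P]\<^sup>p\<close> into a sum over the sets
  of slots receiving \<open>v v\<^sup>T\<close>; every nonempty set contributes zero.\<close>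
lemma tmul_perp_proj_fixed:
  assumes Y: "perm_invariant (Suc q) Y" and Yv: "\<And>is. is \<in> idx q \<Longrightarrow> tfirst v Y is = 0"
    and js: "length js = Suc q"
  shows "tmul (Suc q) Y (perp_proj v) js = Y js"
proof -
  let ?K = "{..<Suc q}"
  define f1 where "f1 is k = - (v $ (is ! k) * v $ (js ! k) / (v \<bullet> v))" for "is" k
  define f2 where "f2 is k = (if is ! k = js ! k then 1 else 0 :: real)" for "is" k
  define F where "F X k i = (if k \<in> X then - (v $ i * v $ (js ! k) / (v \<bullet> v))
      else if i = js ! k then 1 else 0 :: real)" for X k i
  define g where "g X = (\<Sum>is\<in>idx (Suc q). Y is * (\<Prod>k<Suc q. F X k (is ! k)))" for X
  have F_split: "(\<Prod>k\<in>X. f1 is k) * (\<Prod>k\<in>?K - X. f2 is k) = (\<Prod>k<Suc q. F X k (is ! k))"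
    if "X \<subseteq> ?K" for X "is"
  proof -
    have "(\<Prod>k<Suc q. F X k (is ! k))
        = (\<Prod>k\<in>?K \<inter> {k. k \<in> X}. f1 is k) * (\<Prod>k\<in>?K \<inter> - {k. k \<in> X}. f2 is k)"
      unfolding F_def f1_def f2_def by (rule prod.If_cases) simp
    moreover have "?K \<inter> {k. k \<in> X} = X" "?K \<inter> - {k. k \<in> X} = ?K - X"
      using that by auto
    ultimately show ?thesis by simp
  qed
  have "(\<Prod>k<Suc q. perp_proj v $ (is ! k) $ (js ! k)) = (\<Prod>k\<in>?K. f1 is k + f2 is k)" for "is"
    by (intro prod.cong refl) (simp add: perp_proj_entry f1_def f2_def)
  then have "tmul (Suc q) Y (perp_proj v) js
      = (\<Sum>is\<in>idx (Suc q). \<Sum>X\<in>Pow ?K. Y is * ((\<Prod>k\<in>X. f1 is k) * (\<Prod>k\<in>?K - X. f2 is k)))"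
    by (simp only: tmul_def prod_add[OF finite_lessThan] sum_distrib_left)
  also have "\<dots> = (\<Sum>X\<in>Pow ?K. g X)"
    unfolding g_def by (subst sum.swap) (intro sum.cong refl; simp add: F_split)
  also have "\<dots> = g {} + (\<Sum>X\<in>Pow ?K - {{}}. g X)"
    by (rule sum.remove) auto
  also have "(\<Sum>X\<in>Pow ?K - {{}}. g X) = 0"
  proof (intro sum.neutral ballI)
    fix X assume "X \<in> Pow ?K - {{}}"
    then obtain m where "m \<in> X" "m < Suc q" by auto
    then show "g X = 0"
      unfolding g_def
      by (intro perm_invariant_contract_slot[OF Y Yv, of m _ "- v $ (js ! m) / (v \<bullet> v)"])
        (auto simp: F_def)
  qed
  also have "g {} = tmul (Suc q) Y (mat 1) js"
    unfolding g_def tmul_def F_def by (simp add: mat_def)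
  finally show ?thesis
    using tmul_mat_1[OF js] by simp
qed

definition dderiv :: "'a::real_normed_vector \<Rightarrow> ('a \<Rightarrow> real) \<Rightarrow> 'a \<Rightarrow> real" where
  "dderiv u g y = frechet_derivative g (at y) u"

lemma has_real_derivative_along_line:
  assumes "g differentiable (at (y + t *\<^sub>R u))"
  shows "((\<lambda>t. g (y + t *\<^sub>R u)) has_real_derivative dderiv u g (y + t *\<^sub>R u)) (at t)"
proof -
  let ?g' = "frechet_derivative g (at (y + t *\<^sub>R u))"
  have g': "(g has_derivative ?g') (at (y + t *\<^sub>R u))"
    using assms frechet_derivative_works by blast
  have "((\<lambda>t. y + t *\<^sub>R u) has_derivative (\<lambda>h. h *\<^sub>R u)) (at t)"
    by (auto intro!: derivative_eq_intros)
  from diff_chain_at[OF this g'] have "((\<lambda>t. g (y + t *\<^sub>R u)) has_derivative (\<lambda>h. ?g' (h *\<^sub>R u))) (at t)"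
    by (simp add: o_def)
  moreover have "?g' (h *\<^sub>R u) = ?g' u * h" for h
    using linear_scale[OF has_derivative_linear[OF g']] by simp
  ultimately show ?thesis
    by (simp add: has_field_derivative_def dderiv_def mult_commute_abs)
qed

lemma second_difference_mean_value:
  assumes g: "\<And>z. g differentiable (at z)" and ga: "\<And>z. dderiv a g differentiable (at z)"
    and h: "h > 0"
  obtains \<xi> where "norm (\<xi> - x) \<le> h * (norm a + norm b)"
    "g (x + h *\<^sub>R a + h *\<^sub>R b) - g (x + h *\<^sub>R a) - g (x + h *\<^sub>R b) + g x
       = h * h * dderiv b (dderiv a g) \<xi>"
proof -
  define \<phi> where "\<phi> t = g (x + h *\<^sub>R b + t *\<^sub>R a) - g (x + t *\<^sub>R a)" for t
  define \<psi> where "\<psi> t s = dderiv a g (x + t *\<^sub>R a + s *\<^sub>R b)" for t s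
  have "\<exists>t. 0 < t \<and> t < h \<and>
      \<phi> h - \<phi> 0 = (h - 0) * (dderiv a g (x + h *\<^sub>R b + t *\<^sub>R a) - dderiv a g (x + t *\<^sub>R a))"
    unfolding \<phi>_def by (rule MVT2[OF h]) (intro DERIV_diff has_real_derivative_along_line g)
  then obtain t where t: "0 < t" "t < h" and t_eq: "\<phi> h - \<phi> 0 = h * (\<psi> t h - \<psi> t 0)"
    by (auto simp: \<psi>_def algebra_simps)
  have "\<exists>s. 0 < s \<and> s < h \<and> \<psi> t h - \<psi> t 0 = (h - 0) * dderiv b (dderiv a g) (x + t *\<^sub>R a + s *\<^sub>R b)"
    unfolding \<psi>_def by (rule MVT2[OF h]) (intro has_real_derivative_along_line ga)
  then obtain s where s: "0 < s" "s < h"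
    and s_eq: "\<psi> t h - \<psi> t 0 = h * dderiv b (dderiv a g) (x + t *\<^sub>R a + s *\<^sub>R b)"
    by auto
  have "norm (t *\<^sub>R a + s *\<^sub>R b) \<le> h * (norm a + norm b)"
    using norm_triangle_ineq[of "t *\<^sub>R a" "s *\<^sub>R b"] t s
      mult_right_mono[of t h "norm a"] mult_right_mono[of s h "norm b"]
    by (simp add: distrib_left)
  moreover have "g (x + h *\<^sub>R a + h *\<^sub>R b) - g (x + h *\<^sub>R a) - g (x + h *\<^sub>R b) + g x
      = h * h * dderiv b (dderiv a g) (x + t *\<^sub>R a + s *\<^sub>R b)"
    using t_eq s_eq by (simp add: \<phi>_def algebra_simps)
  ultimately show ?thesis
    by (intro that[of "x + t *\<^sub>R a + s *\<^sub>R b"]) (simp_all add: add.assoc)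
qed

text \<open>Schwarz's theorem: both mixed derivatives are limits of the same second difference quotient.\<close>
lemma dderiv_commute:
  assumes g: "\<And>z. g differentiable (at z)"
    and ga: "\<And>z. dderiv a g differentiable (at z)" and gb: "\<And>z. dderiv b g differentiable (at z)"
    and cont_ab: "continuous_on UNIV (dderiv b (dderiv a g))"
    and cont_ba: "continuous_on UNIV (dderiv a (dderiv b g))"
  shows "dderiv b (dderiv a g) x = dderiv a (dderiv b g) x"
proof (rule ccontr)
  let ?F = "dderiv b (dderiv a g)" and ?G = "dderiv a (dderiv b g)"
  assume ne: "?F x \<noteq> ?G x"
  define e where "e = \<bar>?F x - ?G x\<bar> / 2"
  have e: "e > 0" using ne by (simp add: e_def)
  obtain d1 where d1: "d1 > 0" "\<And>y. dist y x < d1 \<Longrightarrow> dist (?F y) (?F x) < e"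
    using cont_ab e by (metis UNIV_I continuous_on_iff)
  obtain d2 where d2: "d2 > 0" "\<And>y. dist y x < d2 \<Longrightarrow> dist (?G y) (?G x) < e"
    using cont_ba e by (metis UNIV_I continuous_on_iff)
  define d where "d = min d1 d2"
  define N where "N = norm a + norm b"
  define h where "h = d / (2 * (N + 1))"
  have d: "d > 0" and N1: "N + 1 > 0"
    using d1 d2 by (simp_all add: N_def d_def add_nonneg_pos)
  then have h: "h > 0" and "h * (N + 1) = d / 2"
    by (simp_all add: h_def field_simps)
  then have hd: "h * (norm a + norm b) < d"
    using d unfolding N_def[symmetric] by (simp add: distrib_left)
  obtain \<xi> where \<xi>: "norm (\<xi> - x) \<le> h * (norm a + norm b)"
    "g (x + h *\<^sub>R a + h *\<^sub>R b) - g (x + h *\<^sub>R a) - g (x + h *\<^sub>R b) + g x = h * h * ?F \<xi>"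
    using second_difference_mean_value[OF g ga h] by blast
  obtain \<eta> where \<eta>: "norm (\<eta> - x) \<le> h * (norm b + norm a)"
    "g (x + h *\<^sub>R b + h *\<^sub>R a) - g (x + h *\<^sub>R b) - g (x + h *\<^sub>R a) + g x = h * h * ?G \<eta>"
    using second_difference_mean_value[OF g gb h] by blast
  have "?F \<xi> = ?G \<eta>"
    using \<xi>(2) \<eta>(2) h by (simp add: algebra_simps)
  moreover have "dist (?F \<xi>) (?F x) < e"
    using \<xi>(1) hd by (intro d1(2)) (simp add: dist_norm d_def)
  moreover have "dist (?G \<eta>) (?G x) < e"
    using \<eta>(1) hd by (intro d2(2)) (simp add: dist_norm d_def add.commute)
  ultimately show False
    by (simp add: dist_real_def e_def abs_if split: if_split_asm)
qed

lemma dderiv_pder: "dderiv (axis i 1) (\<lambda>y. pder k f y is) = (\<lambda>y. pder (Suc k) f y (i # is))"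
  by (simp add: dderiv_def fun_eq_iff)

lemma pder_swap:
  assumes f: "Cp p f" and p: "Suc (Suc m) \<le> p" and r: "length r = m"
  shows "pder (Suc (Suc m)) f x (i # j # r) = pder (Suc (Suc m)) f x (j # i # r)"
proof -
  let ?g = "\<lambda>y. pder m f y r"
  have diff: "(\<lambda>y. pder k f y is) differentiable (at z)" if "k < p" "length is = k" for k "is" z
    using f that unfolding Cp_def by auto
  have cont: "continuous_on UNIV (\<lambda>y. pder k f y is)" if "k \<le> p" "length is = k" for k "is"
    using f that unfolding Cp_def by auto
  have "dderiv (axis j 1) (dderiv (axis i 1) ?g) x = dderiv (axis i 1) (dderiv (axis j 1) ?g) x"
  proof (rule dderiv_commute)
    show "?g differentiable (at z)" for z
      by (rule diff) (use p r in simp_all)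
    show "dderiv (axis i 1) ?g differentiable (at z)" "dderiv (axis j 1) ?g differentiable (at z)" for z
      unfolding dderiv_pder by (rule diff; use p r in simp)+
    show "continuous_on UNIV (dderiv (axis j 1) (dderiv (axis i 1) ?g))"
      "continuous_on UNIV (dderiv (axis i 1) (dderiv (axis j 1) ?g))"
      unfolding dderiv_pder by (rule cont; use p r in simp)+
  qed
  then show ?thesis
    by (simp add: dderiv_def dderiv_pder)
qed

lemma pder_perm_invariant:
  assumes f: "Cp p f"
  shows "m \<le> p \<Longrightarrow> length is = m \<Longrightarrow> mset js = mset is \<Longrightarrow> pder m f x js = pder m f x is"
proof (induction m arbitrary: "is" js x)
  case 0
  then show ?case by simp
next
  case (Suc m)
  obtain i is' where is_Cons: "is = i # is'" "length is' = m"
    using Suc.prems by (cases "is") auto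
  obtain j js' where js_Cons: "js = j # js'"
    using Suc.prems mset_eq_length by (cases js) fastforce+
  have IH: "pder m f y bs = pder m f y as" if "length as = m" "mset bs = mset as" for as bs y
    by (rule Suc.IH) (use Suc.prems(1) that in auto)
  show ?case
  proof (cases "i = j")
    case True
    then show ?thesis
      using Suc.prems is_Cons js_Cons IH[of is' js'] by simp
  next
    case False
    then have "j \<in> set is'"
      using Suc.prems(3) is_Cons js_Cons by (metis insert_iff list.set_intros(1) set_mset_mset mset.simps(2) set_mset_add_mset_insert)
    define r where "r = remove1 j is'"
    obtain m' where m: "m = Suc m'"
      using \<open>j \<in> set is'\<close> is_Cons(2) by (cases m) auto
    have is': "mset is' = mset (j # r)"
      using \<open>j \<in> set is'\<close> by (simp add: r_def)
    then have r: "length r = m'"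
      using is_Cons(2) m by (metis length_Cons mset_eq_length nat.inject)
    have js': "mset js' = mset (i # r)"
      using Suc.prems(3) is_Cons js_Cons is' by (simp add: add_mset_commute)
    have "pder (Suc m) f x js = pder (Suc m) f x (j # i # r)"
      using js_Cons IH[of "i # r" js'] js' r m by simp
    also have "\<dots> = pder (Suc m) f x (i # j # r)"
      using pder_swap[OF f, of m' r x j i] Suc.prems(1) r m by simp
    also have "\<dots> = pder (Suc m) f x is"
      using is_Cons IH[of is' "j # r"] is' r m by simp
    finally show ?thesis .
  qed
qed

lemma abs_teval_le_sum_abs:
  assumes "length us = p" and "\<forall>u\<in>set us. norm u = 1"
  shows "\<bar>teval p T us\<bar> \<le> (\<Sum>is\<in>idx p. \<bar>T is\<bar>)"
proof -
  have "\<bar>(us ! k) $ i\<bar> \<le> 1" if "k < p" for k i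
    using assms that component_le_norm_cart[of "us ! k" i] by (metis nth_mem)
  then have "\<bar>T is * (\<Prod>k<p. (us ! k) $ (is ! k))\<bar> \<le> \<bar>T is\<bar>" for "is"
    by (auto simp: abs_mult abs_prod intro!: mult_left_le prod_le_1)
  then have "(\<Sum>is\<in>idx p. \<bar>T is * (\<Prod>k<p. (us ! k) $ (is ! k))\<bar>) \<le> (\<Sum>is\<in>idx p. \<bar>T is\<bar>)"
    by (rule sum_mono)
  with sum_abs show ?thesis
    unfolding teval_def by (rule order_trans)
qed

lemma abs_teval_le_tnorm2:
  assumes "length us = p" and "\<forall>u\<in>set us. norm u = 1"
  shows "\<bar>teval p T us\<bar> \<le> tnorm2 p T"
  unfolding tnorm2_def
proof (rule cSup_upper)
  show "bdd_above {\<bar>teval p T us\<bar> | us. length us = p \<and> (\<forall>u\<in>set us. norm u = 1)}"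
    by (rule bdd_aboveI[where M="\<Sum>is\<in>idx p. \<bar>T is\<bar>"]) (auto intro: abs_teval_le_sum_abs)
qed (use assms in auto)

lemma tnorm2_nonneg: "0 \<le> tnorm2 p (T :: 'n::finite tensor)"
  using abs_teval_le_tnorm2[of "replicate p (axis undefined 1)" p T]
  by simp

lemma tnorm2_least:
  assumes "\<And>us. length us = p \<Longrightarrow> \<forall>u\<in>set us. norm u = 1 \<Longrightarrow> \<bar>teval p T us\<bar> \<le> c"
  shows "tnorm2 p (T :: 'n::finite tensor) \<le> c"
  unfolding tnorm2_def
proof (rule cSup_least)
  show "{\<bar>teval p T us\<bar> | us. length us = p \<and> (\<forall>u\<in>set us. norm u = 1)} \<noteq> {}"
    by (auto intro!: exI[of _ "replicate p (axis undefined 1)"])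
qed (use assms in auto)

lemma tnorm2_cong:
  assumes "\<And>is. is \<in> idx p \<Longrightarrow> T is = T' is"
  shows "tnorm2 p T = tnorm2 p T'"
proof -
  have "teval p T = teval p T'"
    using assms by (intro ext teval_cong)
  then show ?thesis
    unfolding tnorm2_def by simp
qed

lemma tnorm2_diff_le: "tnorm2 p (\<lambda>is. A is - B is) \<le> tnorm2 p A + tnorm2 p (B :: 'n::finite tensor)"
proof (rule tnorm2_least)
  fix us :: "(real^'n) list"
  assume "length us = p" "\<forall>u\<in>set us. norm u = 1"
  then show "\<bar>teval p (\<lambda>is. A is - B is) us\<bar> \<le> tnorm2 p A + tnorm2 p B"
    unfolding teval_diff using abs_teval_le_tnorm2[of us p A] abs_teval_le_tnorm2[of us p B] by simp
qed

lemma abs_teval_le_prod_norm: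
  assumes l: "length zs = p"
  shows "\<bar>teval p T zs\<bar> \<le> (\<Prod>k<p. norm (zs ! k)) * tnorm2 p T"
proof (cases "\<exists>k<p. zs ! k = 0")
  case True
  then obtain k where "k < p" "zs ! k = 0" by blast
  then have "teval p T zs = 0"
    unfolding teval_def by (auto intro!: sum.neutral prod_zero bexI[of _ k])
  then show ?thesis
    by (simp add: prod_nonneg tnorm2_nonneg)
next
  case False
  define ws where "ws = map (\<lambda>z. (1 / norm z) *\<^sub>R z) zs"
  have ws: "length ws = p" "\<forall>w\<in>set ws. norm w = 1"
    using False l by (auto simp: ws_def in_set_conv_nth)
  have "teval p T zs = (\<Prod>k<p. norm (zs ! k)) * teval p T ws"
    unfolding teval_def sum_distrib_left using False l
    by (intro sum.cong refl) (simp add: ws_def prod.distrib[symmetric] mult_ac)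
  then have "\<bar>teval p T zs\<bar> = (\<Prod>k<p. norm (zs ! k)) * \<bar>teval p T ws\<bar>"
    by (simp add: abs_mult prod_nonneg abs_prod)
  also have "\<dots> \<le> (\<Prod>k<p. norm (zs ! k)) * tnorm2 p T"
    using ws by (intro mult_left_mono abs_teval_le_tnorm2 prod_nonneg) auto
  finally show ?thesis .
qed

lemma tnorm2_tmul_le: "tnorm2 p (tmul p T M) \<le> onorm (\<lambda>x. M *v x) ^ p * tnorm2 p T"
proof (rule tnorm2_least)
  fix us :: "(real^'a) list"
  assume l: "length us = p" and u: "\<forall>u\<in>set us. norm u = 1"
  have "norm (M *v (us ! k)) \<le> onorm (\<lambda>x. M *v x)" if "k < p" for k
    using onorm[OF matrix_vector_mul_bounded_linear[of M], of "us ! k"] u l that by simp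
  then have "(\<Prod>k<p. norm (map (\<lambda>u. M *v u) us ! k)) \<le> onorm (\<lambda>x. M *v x) ^ p"
    using l prod_mono[of "{..<p}" "\<lambda>k. norm (M *v (us ! k))" "\<lambda>_. onorm (\<lambda>x. M *v x)"] by simp
  then have "(\<Prod>k<p. norm (map (\<lambda>u. M *v u) us ! k)) * tnorm2 p T \<le> onorm (\<lambda>x. M *v x) ^ p * tnorm2 p T"
    by (rule mult_right_mono) (rule tnorm2_nonneg)
  with abs_teval_le_prod_norm[of "map (\<lambda>u. M *v u) us" p T] l
  show "\<bar>teval p (tmul p T M) us\<bar> \<le> onorm (\<lambda>x. M *v x) ^ p * tnorm2 p T"
    unfolding teval_tmul[OF l] by simp
qed

lemma matrix_inv_right: "invertible A \<Longrightarrow> A ** matrix_inv A = mat 1"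
  unfolding invertible_def matrix_inv_def by (rule someI2_ex) auto

lemma matrix_inv_left: "invertible A \<Longrightarrow> matrix_inv A ** A = mat 1"
  unfolding invertible_def matrix_inv_def by (rule someI2_ex) auto

lemma onorm_conj_perp_proj_le:
  fixes W :: "real^'n^'n::finite"
  shows "onorm (\<lambda>x. (W ** perp_proj v ** matrix_inv W) *v x) \<le> kappa2 W"
  unfolding kappa2_def
proof (rule onorm_le)
  fix u :: "real^'n"
  let ?nW = "onorm (\<lambda>x. W *v x)" and ?nWi = "onorm (\<lambda>x. matrix_inv W *v x)"
  have bound: "norm (M *v x) \<le> onorm (\<lambda>x. M *v x) * norm x" for M :: "real^'n^'n" and x
    using onorm[OF matrix_vector_mul_bounded_linear[of M]] by simp
  have "norm ((W ** perp_proj v ** matrix_inv W) *v u) \<le> ?nW * norm (perp_proj v *v (matrix_inv W *v u))"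
    using bound by (simp add: matrix_vector_mul_assoc[symmetric])
  also have "\<dots> \<le> ?nW * norm (matrix_inv W *v u)"
    by (intro mult_left_mono norm_perp_proj_le onorm_pos_le matrix_vector_mul_bounded_linear)
  also have "\<dots> \<le> ?nW * (?nWi * norm u)"
    by (intro mult_left_mono bound onorm_pos_le matrix_vector_mul_bounded_linear)
  finally show "norm ((W ** perp_proj v ** matrix_inv W) *v u) \<le> ?nW * ?nWi * norm u"
    by (simp add: mult.assoc)
qed

lemma frob_add_le_imp_zero:
  assumes orth: "(\<Sum>js\<in>idx p. X js * Y js) = 0"
    and le: "frob p (\<lambda>js. X js + Y js) \<le> frob p X" and js: "js \<in> idx p"
  shows "Y js = 0"
proof -
  have "(\<Sum>js\<in>idx p. (X js + Y js)\<^sup>2) \<le> (\<Sum>js\<in>idx p. (X js)\<^sup>2)"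
    using le unfolding frob_def by (simp add: sum_nonneg)
  moreover have "(\<Sum>js\<in>idx p. (X js + Y js)\<^sup>2)
      = (\<Sum>js\<in>idx p. (X js)\<^sup>2) + 2 * (\<Sum>js\<in>idx p. X js * Y js) + (\<Sum>js\<in>idx p. (Y js)\<^sup>2)"
    by (simp add: power2_sum sum.distrib sum_distrib_left mult.assoc)
  ultimately have "(\<Sum>js\<in>idx p. (Y js)\<^sup>2) = 0"
    using orth by (simp add: antisym sum_nonneg)
  then show ?thesis
    using js by (simp add: sum_nonneg_eq_0_iff)
qed

lemma secant_correction_feasible:
  fixes W :: "real^'n^'n::finite"
  assumes p: "0 < p" and W: "invertible W" and Ct: "perm_invariant p Ct" and Ck: "sym_tensor p Ck"
  defines "R \<equiv> tmul p (\<lambda>is. Ct is - Ck is) W"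
  shows "(\<lambda>is. if length is = p then Ck is + tmul p (\<lambda>js. R js - tmul p R (projP W s) js) (matrix_inv W) is
            else 0) \<in> feasible p s Ct"
    (is "?C \<in> _")
proof -
  obtain q where q: "p = Suc q"
    using p by (cases p) auto
  let ?Wi = "matrix_inv W"
  let ?v = "?Wi *v s"
  let ?A = "\<lambda>js. R js - tmul p R (projP W s) js"
  have Wv: "W *v ?v = s"
    by (simp add: matrix_vector_mul_assoc matrix_inv_right[OF W])
  have R: "perm_invariant p R"
    unfolding R_def using Ct sym_tensor_perm_invariant[OF Ck]
    by (intro perm_invariant_tmul perm_invariant_diff)
  then have A: "perm_invariant p ?A"
    by (intro perm_invariant_diff perm_invariant_tmul)
  have "sym_tensor p ?C"
    unfolding sym_tensor_def
  proof (intro conjI allI impI)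
    fix "is" js :: "'n list"
    assume l: "length is = p" and m: "mset js = mset is"
    have "Ck js = Ck is" "tmul p ?A ?Wi js = tmul p ?A ?Wi is"
      using l m sym_tensor_perm_invariant[OF Ck] perm_invariant_tmul[OF A]
      unfolding perm_invariant_def by blast+
    then show "?C js = ?C is"
      using l mset_eq_length[OF m] by simp
  qed simp
  moreover have "tfirst s ?C is = tfirst s Ct is" if "length is = p - 1" for "is"
  proof -
    have "tfirst ?v (tmul p R (projP W s)) js = 0" for js
      by (simp add: q tfirst_tmul projP_eq_perp_proj perp_proj_self)
    then have "tfirst ?v ?A = tmul q (tfirst s (\<lambda>is. Ct is - Ck is)) W"
      unfolding tfirst_diff R_def q tfirst_tmul Wv by (simp add: fun_eq_iff)
    then have "tfirst s (tmul p ?A ?Wi) is = tfirst s (\<lambda>is. Ct is - Ck is) is"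
      using that by (simp add: q tfirst_tmul tmul_tmul matrix_inv_right[OF W] tmul_mat_1)
    then show ?thesis
      using that unfolding tfirst_def by (simp add: q sum.distrib algebra_simps sum_subtractf)
  qed
  ultimately show ?thesis
    unfolding feasible_def by blast
qed

lemma secant_update_closed_form:
  fixes W :: "real^'n^'n::finite"
  assumes p: "0 < p" and W: "invertible W" and Ct: "perm_invariant p Ct" and Ck: "sym_tensor p Ck"
    and C1: "C1 \<in> feasible p s Ct"
    and min: "\<forall>C' \<in> feasible p s Ct. frob p (tmul p (\<lambda>is. C1 is - Ck is) W)
                \<le> frob p (tmul p (\<lambda>is. C' is - Ck is) W)"
    and js: "js \<in> idx p"
  defines "R \<equiv> tmul p (\<lambda>is. Ct is - Ck is) W"
  shows "tmul p (\<lambda>is. C1 is - Ck is) W js = R js - tmul p R (projP W s) js"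
proof -
  obtain q where q: "p = Suc q"
    using p by (cases p) auto
  let ?Wi = "matrix_inv W" and ?P = "projP W s"
  let ?A = "\<lambda>js. R js - tmul p R ?P js"
  define C' where "C' is = (if length is = p then Ck is + tmul p ?A ?Wi is else 0)" for "is"
  have C': "C' \<in> feasible p s Ct"
    unfolding C'_def R_def by (rule secant_correction_feasible[OF p W Ct Ck])
  define X where "X = tmul p (\<lambda>is. C' is - Ck is) W"
  define Y where "Y = tmul p (\<lambda>is. C1 is - C' is) W"
  have X: "X js = ?A js" if "js \<in> idx p" for js
  proof -
    have "X = tmul p (tmul p ?A ?Wi) W"
      unfolding X_def by (rule tmul_cong) (simp add: C'_def idx_def)
    then show ?thesis
      using that by (simp add: tmul_tmul matrix_inv_left[OF W] tmul_mat_1 idx_def)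
  qed
  have "perm_invariant p Y"
    unfolding Y_def using C1 C'
    by (intro perm_invariant_tmul perm_invariant_diff) (auto simp: feasible_def sym_tensor_perm_invariant)
  moreover have "tfirst (?Wi *v s) Y is = 0" for "is"
  proof -
    have "tfirst s (\<lambda>is. C1 is - C' is) is = 0" if "is \<in> idx q" for "is"
      using that C1 C' by (simp add: feasible_def tfirst_diff idx_def q)
    then have "tmul q (tfirst s (\<lambda>is. C1 is - C' is)) W = tmul q (\<lambda>_. 0) W"
      by (rule tmul_cong)
    then show ?thesis
      unfolding Y_def q tfirst_tmul matrix_vector_mul_assoc matrix_inv_right[OF W] matrix_vector_mul_lid
      by simp
  qed
  ultimately have Y_fixed: "tmul p Y ?P js = Y js" if "js \<in> idx p" for js
    using that unfolding projP_eq_perp_proj q by (intro tmul_perp_proj_fixed) (auto simp: idx_def)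
  have "(\<Sum>js\<in>idx p. X js * Y js) = (\<Sum>js\<in>idx p. R js * Y js) - (\<Sum>js\<in>idx p. tmul p R ?P js * Y js)"
    by (simp add: X sum_subtractf left_diff_distrib)
  also have "(\<Sum>js\<in>idx p. tmul p R ?P js * Y js) = (\<Sum>js\<in>idx p. R js * Y js)"
    unfolding sum_tmul_transpose using Y_fixed
    by (simp add: projP_eq_perp_proj transpose_perp_proj)
  finally have "(\<Sum>js\<in>idx p. X js * Y js) = 0"
    by simp
  moreover have "tmul p (\<lambda>is. C1 is - Ck is) W = (\<lambda>js. X js + Y js)"
    unfolding X_def Y_def tmul_add[symmetric] by simp
  moreover have "frob p (tmul p (\<lambda>is. C1 is - Ck is) W) \<le> frob p X"
    using min C' unfolding X_def by blast
  ultimately show ?thesis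
    using frob_add_le_imp_zero[where p = p and X = X and Y = Y, OF _ _ js] X[OF js] by simp
qed

lemma secant_error_eq:
  fixes W :: "real^'n^'n::finite"
  assumes W: "invertible W"
    and update: "\<forall>js\<in>idx p. tmul p (\<lambda>is. C1 is - Ck is) W js
        = tmul p (\<lambda>is. Ct is - Ck is) W js - tmul p (tmul p (\<lambda>is. Ct is - Ck is) W) P js"
    and E: "\<forall>js\<in>idx p. tmul p (\<lambda>is. C1 is - Cs is) W js
        = tmul p (tmul p (\<lambda>is. Ck is - Cs is) W) P js + tmul p E W js"
    and js: "js \<in> idx p"
  shows "E js = Ct js - Cs js - tmul p (\<lambda>is. Ct is - Cs is) (W ** P ** matrix_inv W) js"
proof -
  let ?G = "tmul p (\<lambda>is. Ct is - Cs is) W" and ?B = "tmul p (\<lambda>is. Ck is - Cs is) W"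
  let ?R = "tmul p (\<lambda>is. Ct is - Ck is) W" and ?U = "tmul p (\<lambda>is. C1 is - Ck is) W"
  have R: "?R = (\<lambda>js. ?G js - ?B js)"
    by (simp add: fun_eq_iff tmul_diff)
  have EW: "tmul p E W js = ?G js - tmul p ?G P js" if "js \<in> idx p" for js
  proof -
    have "tmul p E W js = tmul p (\<lambda>is. C1 is - Cs is) W js - tmul p ?B P js"
      using E that by simp
    also have "tmul p (\<lambda>is. C1 is - Cs is) W js = ?U js + ?B js"
      by (simp add: tmul_diff)
    also have "?U js = ?R js - tmul p ?R P js"
      using update that by simp
    also have "tmul p ?R P js = tmul p ?G P js - tmul p ?B P js"
      unfolding R tmul_diff ..
    finally show ?thesis
      unfolding R by simp
  qed
  have "E js = tmul p (tmul p E W) (matrix_inv W) js"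
    using js by (simp add: tmul_tmul matrix_inv_right[OF W] tmul_mat_1 idx_def)
  also have "\<dots> = tmul p (\<lambda>js. ?G js - tmul p ?G P js) (matrix_inv W) js"
    by (simp only: tmul_cong[OF EW])
  also have "\<dots> = Ct js - Cs js - tmul p (\<lambda>is. Ct is - Cs is) (W ** P ** matrix_inv W) js"
    using js by (simp add: tmul_diff tmul_tmul matrix_inv_right[OF W] tmul_mat_1 matrix_mul_assoc idx_def)
  finally show ?thesis .
qed

lemma avgD_perm_invariant:
  assumes "Cp p f"
  shows "perm_invariant p (avgD p f x s)"
  unfolding perm_invariant_def avgD_def
proof (intro allI impI)
  fix "is" js :: "'a list"
  assume "length is = p" "mset js = mset is"
  then have "pder p f y js = pder p f y is" for y
    by (intro pder_perm_invariant[OF assms]) simp_all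
  then show "integral {0..1} (\<lambda>t. pder p f (x + t *\<^sub>R s) js)
      = integral {0..1} (\<lambda>t. pder p f (x + t *\<^sub>R s) is)"
    by simp
qed

theorem mainTheorem6:
  fixes p :: nat and f :: "real^'n::finite \<Rightarrow> real"
    and x :: "nat \<Rightarrow> real^'n" and W :: "nat \<Rightarrow> real^'n^'n"
    and C :: "nat \<Rightarrow> 'n tensor" and xstar :: "real^'n"
    and E :: "'n tensor" and k :: nat
  assumes "p \<ge> 2" and "Cp p f"
    and "\<And>j. x (Suc j) - x j \<noteq> 0"
    and "\<And>j. invertible (W j)"
    and "sym_tensor p (C 0)"
    and "\<And>j. C (Suc j) \<in> feasible p (x (Suc j) - x j) (avgD p f (x j) (x (Suc j) - x j))
             \<and> (\<forall>C' \<in> feasible p (x (Suc j) - x j) (avgD p f (x j) (x (Suc j) - x j)).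
                  frob p (tmul p (\<lambda>is. C (Suc j) is - C j is) (W j))
                    \<le> frob p (tmul p (\<lambda>is. C' is - C j is) (W j)))"
    and "\<forall>is. length is = p \<longrightarrow>
           tmul p (\<lambda>is. C (Suc k) is - pder p f xstar is) (W k) is
           = tmul p (tmul p (\<lambda>is. C k is - pder p f xstar is) (W k)) (projP (W k) (x (Suc k) - x k)) is
             + tmul p E (W k) is"
  shows "tnorm2 p E \<le> (1 + kappa2 (W k) ^ p) *
           tnorm2 p (\<lambda>is. avgD p f (x k) (x (Suc k) - x k) is - pder p f xstar is)"
proof -
  let ?s = "x (Suc k) - x k"
  let ?Ct = "avgD p f (x k) ?s"
  let ?D = "\<lambda>is. ?Ct is - pder p f xstar is"
  let ?M = "W k ** projP (W k) ?s ** matrix_inv (W k)"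
  have p: "0 < p"
    using assms(1) by simp
  have Ck: "sym_tensor p (C k)"
    using assms(5,6) by (cases k) (auto simp: feasible_def)
  have "\<forall>js\<in>idx p. tmul p (\<lambda>is. C (Suc k) is - C k is) (W k) js
      = tmul p (\<lambda>is. ?Ct is - C k is) (W k) js
        - tmul p (tmul p (\<lambda>is. ?Ct is - C k is) (W k)) (projP (W k) ?s) js"
    using secant_update_closed_form[OF p assms(4) avgD_perm_invariant[OF assms(2)] Ck
        assms(6)[THEN conjunct1] assms(6)[THEN conjunct2]] by blast
  moreover have "\<forall>js\<in>idx p. tmul p (\<lambda>is. C (Suc k) is - pder p f xstar is) (W k) js
      = tmul p (tmul p (\<lambda>is. C k is - pder p f xstar is) (W k)) (projP (W k) ?s) js + tmul p E (W k) js"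
    using assms(7) by (simp add: idx_def)
  ultimately have "E js = ?D js - tmul p ?D ?M js" if "js \<in> idx p" for js
    using secant_error_eq[OF assms(4) _ _ that] by blast
  then have "tnorm2 p E = tnorm2 p (\<lambda>js. ?D js - tmul p ?D ?M js)"
    by (rule tnorm2_cong)
  also have "\<dots> \<le> tnorm2 p ?D + tnorm2 p (tmul p ?D ?M)"
    by (rule tnorm2_diff_le)
  also have "tnorm2 p (tmul p ?D ?M) \<le> kappa2 (W k) ^ p * tnorm2 p ?D"
    using onorm_conj_perp_proj_le[of "W k"]
    by (intro order_trans[OF tnorm2_tmul_le] mult_right_mono power_mono tnorm2_nonneg onorm_pos_le
        matrix_vector_mul_bounded_linear) (simp add: projP_eq_perp_proj)
  finally show ?thesis
    by (simp add: algebra_simps)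
qed

end
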